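(* Let $E$ be an sc-Banach space and let $V$ be a partial quadrant in a finite-dimensional real vector space. Let $f:\mathcal O(V\oplus E,0)\to (E,0)$ be an $\mathrm{sc}^0$-contraction germ. Then there exists a uniquely determined $\mathrm{sc}^0$-germ $\delta:\mathcal O(V,0)\to (E,0)$ such that the graph germ $\mathrm{gr}(\delta):v\mapsto (v,\delta(v))$ satisfies $f\circ \mathrm{gr}(\delta)=0$, i.e. $f(v,\delta(v))=0$ for all $v$ near $0$.
   Context: An sc-Banach space is a Banach space $E$ together with a nested sequence of Banach spaces $E=E_0\supset E_1\supset E_2\supset\cdots$ such that for $m<n$ the inclusion $E_n\to E_m$ is a compact operator and $E_\infty=\bigcap_m E_m$ is dense in every $E_m$; $\|\cdot\|_m$ is the norm of $E_m$. A finite-dimensional space carries the constant structure $E_m=E$, and direct sums carry the levelwise structure $(E\oplus F)_m=E_m\oplus F_m$. A partial quadrant in a finite-dimensional space $F$ is a set $L([0,\infty)^k\oplus\mathbb R^{n-k})$ for a linear isomorphism $L:\mathbb R^n\to F$. For a closed subset $C$ of an sc-Banach space, $C_m=C\cap E_m$. A germ of neighborhoods $\mathcal O(C,0)$ is a decreasing sequence $U_0\supset U_1\supset\cdots$ where $U_m$ is a relatively open neighborhood of $0$ in $C_m$ (topology of $E_m$); germs are identified when they agree after shrinking these neighborhoods. An $\mathrm{sc}^0$-germ $f:\mathcal O(C,0)\to(F,0)$ into an sc-Banach space $F$ is a continuous map $f:U_0\to F_0$ with $f(0)=0$, $f(U_m)\subset F_m$ and $f:U_m\to F_m$ continuous for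 every $m$. An $\mathrm{sc}^0$-contraction germ is an $\mathrm{sc}^0$-germ $f:\mathcal O(V\oplus E,0)\to(E,0)$ of the form $f(v,u)=u-B(v,u)$ such that for every level $m\ge 0$ and every $0<\varepsilon<1$ one has $\|B(v,u)-B(v,u')\|_m\le\varepsilon\|u-u'\|_m$ for all $(v,u),(v,u')$ in some neighborhood of $(0,0)$ in $V\oplus E_m$ (depending on $m$ and $\varepsilon$). *)

theory Defs
  imports "HOL-Analysis.Analysis"
begin

definition sc_banach :: "(nat \<Rightarrow> 'e::banach set) \<Rightarrow> (nat \<Rightarrow> 'e \<Rightarrow> real) \<Rightarrow> bool" where
  "sc_banach El nm \<longleftrightarrow>
     El 0 = UNIV \<and> (\<forall>x. nm 0 x = norm x) \<and>
     (\<forall>m. El (Suc m) \<subseteq> El m) \<and>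
     (\<forall>m. subspace (El m)) \<and>
     (\<forall>m. \<forall>x\<in>El m. 0 \<le> nm m x \<and> (nm m x = 0 \<longleftrightarrow> x = 0)) \<and>
     (\<forall>m. \<forall>x\<in>El m. \<forall>y\<in>El m. nm m (x + y) \<le> nm m x + nm m y) \<and>
     (\<forall>m. \<forall>x\<in>El m. \<forall>c::real. nm m (c *\<^sub>R x) = \<bar>c\<bar> * nm m x) \<and>
     (\<forall>m (s::nat \<Rightarrow> 'e). (\<forall>k. s k \<in> El m) \<and>
            (\<forall>e>0. \<exists>N. \<forall>i\<ge>N. \<forall>j\<ge>N. nm m (s i - s j) < e)
            \<longrightarrow> (\<exists>l\<in>El m. (\<lambda>k. nm m (s k - l)) \<longlonglongrightarrow> 0)) \<and>
     (\<forall>m n (s::nat \<Rightarrow> 'e). m < n \<and> (\<forall>k. s k \<in> El n) \<and> (\<exists>M. \<forall>k. nm n (s k) \<le> M)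
            \<longrightarrow> (\<exists>(r::nat \<Rightarrow> nat) l. strict_mono r \<and> l \<in> El m \<and> (\<lambda>k. nm m (s (r k) - l)) \<longlonglongrightarrow> 0)) \<and>
     (\<forall>m. \<forall>x\<in>El m. \<forall>e>0. \<exists>y\<in>(\<Inter>k. El k). nm m (y - x) < e)"

definition partial_quadrant :: "'v::euclidean_space set \<Rightarrow> bool" where
  "partial_quadrant V \<longleftrightarrow>
     (\<exists>L B. linear L \<and> bij (L :: 'v \<Rightarrow> 'v) \<and> B \<subseteq> Basis \<and> V = L ` {x. \<forall>b\<in>B. 0 \<le> x \<bullet> b})"

definition rel_open_nbhd0 :: "'a::ab_group_add set \<Rightarrow> ('a \<Rightarrow> real) \<Rightarrow> 'a set \<Rightarrow> bool" where
  "rel_open_nbhd0 C n U \<longleftrightarrow> U \<subseteq> C \<and> 0 \<in> U \<and>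
     (\<forall>x\<in>U. \<exists>e>0. \<forall>y\<in>C. n (y - x) < e \<longrightarrow> y \<in> U)"

definition cont_lev :: "'a::ab_group_add set \<Rightarrow> ('a \<Rightarrow> real) \<Rightarrow> ('b::ab_group_add \<Rightarrow> real) \<Rightarrow> ('a \<Rightarrow> 'b) \<Rightarrow> bool" where
  "cont_lev U dn fn g \<longleftrightarrow> (\<forall>x\<in>U. \<forall>e>0. \<exists>d>0. \<forall>y\<in>U. dn (y - x) < d \<longrightarrow> fn (g y - g x) < e)"

text \<open>sc0-germ represented by a decreasing sequence of neighbourhoods U and a map g.\<close>
definition sc0_germ ::
  "(nat \<Rightarrow> 'a::ab_group_add set) \<Rightarrow> (nat \<Rightarrow> 'a \<Rightarrow> real) \<Rightarrow> (nat \<Rightarrow> 'b::ab_group_add set) \<Rightarrow> (nat \<Rightarrow> 'b \<Rightarrow> real)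
    \<Rightarrow> (nat \<Rightarrow> 'a set) \<Rightarrow> ('a \<Rightarrow> 'b) \<Rightarrow> bool" where
  "sc0_germ Cl dn Fl fn U g \<longleftrightarrow>
     (\<forall>m. rel_open_nbhd0 (Cl m) (dn m) (U m)) \<and> (\<forall>m. U (Suc m) \<subseteq> U m) \<and>
     g 0 = 0 \<and> (\<forall>m. g ` U m \<subseteq> Fl m) \<and> (\<forall>m. cont_lev (U m) (dn m) (fn m) g)"

definition sum_levels :: "'v set \<Rightarrow> (nat \<Rightarrow> 'e set) \<Rightarrow> nat \<Rightarrow> ('v \<times> 'e) set" where
  "sum_levels V El m = V \<times> El m"

definition sum_norms :: "(nat \<Rightarrow> 'e \<Rightarrow> real) \<Rightarrow> nat \<Rightarrow> ('v::real_normed_vector \<times> 'e) \<Rightarrow> real" where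
  "sum_norms nm m p = norm (fst p) + nm m (snd p)"

definition sc0_contraction_germ ::
  "'v::euclidean_space set \<Rightarrow> (nat \<Rightarrow> 'e::banach set) \<Rightarrow> (nat \<Rightarrow> 'e \<Rightarrow> real)
    \<Rightarrow> (nat \<Rightarrow> ('v \<times> 'e) set) \<Rightarrow> ('v \<times> 'e \<Rightarrow> 'e) \<Rightarrow> bool" where
  "sc0_contraction_germ V El nm U f \<longleftrightarrow>
     sc0_germ (sum_levels V El) (sum_norms nm) El nm U f \<and>
     (\<forall>m. \<forall>\<epsilon>::real. 0 < \<epsilon> \<and> \<epsilon> < 1 \<longrightarrow>
        (\<exists>r>0. \<forall>v\<in>V. \<forall>u\<in>El m. \<forall>u'\<in>El m.
            norm v < r \<and> nm m u < r \<and> nm m u' < r \<longrightarrow>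
            (v, u) \<in> U m \<and> (v, u') \<in> U m \<and>
            nm m ((u - f (v, u)) - (u' - f (v, u'))) \<le> \<epsilon> * nm m (u - u')))"

definition solves_germ ::
  "'v::euclidean_space set \<Rightarrow> (nat \<Rightarrow> ('v \<times> 'e::banach) set) \<Rightarrow> ('v \<times> 'e \<Rightarrow> 'e) \<Rightarrow> (nat \<Rightarrow> 'v set) \<Rightarrow> ('v \<Rightarrow> 'e) \<Rightarrow> bool" where
  "solves_germ V Uf f Ud d \<longleftrightarrow>
     (\<exists>W. rel_open_nbhd0 V norm W \<and> W \<subseteq> Ud 0 \<and> (\<forall>v\<in>W. (v, d v) \<in> Uf 0 \<and> f (v, d v) = 0))"

definition germ_eq :: "'v::euclidean_space set \<Rightarrow> (nat \<Rightarrow> 'v set) \<Rightarrow> ('v \<Rightarrow> 'e) \<Rightarrow> (nat \<Rightarrow> 'v set) \<Rightarrow> ('v \<Rightarrow> 'e) \<Rightarrow> bool" where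
  "germ_eq V U1 g1 U2 g2 \<longleftrightarrow>
     (\<exists>W. rel_open_nbhd0 V norm W \<and> W \<subseteq> U1 0 \<and> W \<subseteq> U2 0 \<and> (\<forall>v\<in>W. g1 v = g2 v))"

end

theory Submission
  imports Defs
begin

text \<open>On every level m the contraction estimate with constant 1/2 holds on a ball of some radius
  r m, so for small v the Picard iteration u \<mapsto> u - f (v, u) started at 0 converges in E_m to a zero
  of f (v, -). Since the compact inclusion E_m \<subseteq> E_0 is bounded, all these level-wise limits are the
  limit in E, which defines the solution germ on a decreasing sequence of balls. Continuity on each
  level and uniqueness both follow from the estimate nm m (u - u') \<le> 2 * nm m (f (v, u')), valid
  for every zero u of f (v, -) in the contraction ball.\<close>

definition norm_on :: "'a::real_vector set \<Rightarrow> ('a \<Rightarrow> real) \<Rightarrow> bool" where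
  "norm_on S N \<longleftrightarrow> subspace S \<and> (\<forall>x\<in>S. 0 \<le> N x \<and> (N x = 0 \<longleftrightarrow> x = 0)) \<and>
     (\<forall>x\<in>S. \<forall>y\<in>S. N (x + y) \<le> N x + N y) \<and> (\<forall>x\<in>S. \<forall>c. N (c *\<^sub>R x) = \<bar>c\<bar> * N x)"

definition complete_on :: "'a::real_vector set \<Rightarrow> ('a \<Rightarrow> real) \<Rightarrow> bool" where
  "complete_on S N \<longleftrightarrow> (\<forall>s. (\<forall>k. s k \<in> S) \<and> (\<forall>e>0. \<exists>M. \<forall>i\<ge>M. \<forall>j\<ge>M. N (s i - s j) < e)
     \<longrightarrow> (\<exists>l\<in>S. (\<lambda>k. N (s k - l)) \<longlonglongrightarrow> 0))"

lemma norm_on_subspace: "norm_on S N \<Longrightarrow> subspace S"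
  unfolding norm_on_def by blast

lemma norm_on_nonneg: "norm_on S N \<Longrightarrow> x \<in> S \<Longrightarrow> 0 \<le> N x"
  unfolding norm_on_def by blast

lemma norm_on_eq_zero_iff: "norm_on S N \<Longrightarrow> x \<in> S \<Longrightarrow> N x = 0 \<longleftrightarrow> x = 0"
  unfolding norm_on_def by blast

lemma norm_on_zero: "norm_on S N \<Longrightarrow> N 0 = 0"
  using norm_on_eq_zero_iff norm_on_subspace subspace_0 by blast

lemma norm_on_triangle: "norm_on S N \<Longrightarrow> x \<in> S \<Longrightarrow> y \<in> S \<Longrightarrow> N (x + y) \<le> N x + N y"
  unfolding norm_on_def by blast

lemma norm_on_minus: "norm_on S N \<Longrightarrow> x \<in> S \<Longrightarrow> N (- x) = N x"
  unfolding norm_on_def by (metis abs_minus_cancel abs_one mult_1 scaleR_minus1_left)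

lemma norm_on_commute: "norm_on S N \<Longrightarrow> x \<in> S \<Longrightarrow> y \<in> S \<Longrightarrow> N (x - y) = N (y - x)"
  by (metis minus_diff_eq norm_on_minus norm_on_subspace subspace_diff)

lemma norm_on_triangle_diff:
  assumes "norm_on S N" "x \<in> S" "y \<in> S" "z \<in> S"
  shows "N (x - z) \<le> N (x - y) + N (y - z)"
  using norm_on_triangle[OF assms(1), of "x - y" "y - z"] assms norm_on_subspace subspace_diff
  by fastforce

lemma norm_on_limit_le:
  assumes N: "norm_on S N" and "\<And>k. s k \<in> S" "l \<in> S"
    and lim: "(\<lambda>k. N (s k - l)) \<longlonglongrightarrow> 0" and bound: "\<And>k. N (s k) \<le> c"
  shows "N l \<le> c"
proof (rule LIMSEQ_le_const)
  show "(\<lambda>k. N (s k - l) + c) \<longlonglongrightarrow> c"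
    using tendsto_add[OF lim tendsto_const, of c] by simp
  have "N l \<le> N (s k - l) + c" for k
    using norm_on_triangle_diff[OF N \<open>l \<in> S\<close> \<open>s k \<in> S\<close>, of 0] bound[of k]
      norm_on_commute[OF N \<open>l \<in> S\<close> \<open>s k \<in> S\<close>] N assms(2,3)
    by (simp add: subspace_0 norm_on_subspace)
  then show "\<exists>M. \<forall>k\<ge>M. N l \<le> N (s k - l) + c" by blast
qed

lemma norm_on_geometric_Cauchy:
  assumes N: "norm_on S N" and S: "\<And>k. s k \<in> S"
    and step: "\<And>k. N (s (Suc k) - s k) \<le> a * (1/2) ^ k"
  shows "\<forall>e>0. \<exists>M. \<forall>i\<ge>M. \<forall>j\<ge>M. N (s i - s j) < e"
proof (intro allI impI)
  fix e :: real assume "0 < e"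
  have a: "0 \<le> a" using step[of 0] norm_on_nonneg[OF N] N S
    by (metis mult.right_neutral norm_on_subspace order.trans power_0 subspace_diff)
  have telescope: "N (s j - s i) \<le> 2 * a * (1/2) ^ i - 2 * a * (1/2) ^ j" if "i \<le> j" for i j
    using that
  proof (induction j rule: dec_induct)
    case base
    then show ?case using norm_on_zero[OF N] by simp
  next
    case (step n)
    have "N (s (Suc n) - s i) \<le> N (s (Suc n) - s n) + N (s n - s i)"
      using norm_on_triangle_diff[OF N S S S] .
    then show ?case using assms(3)[of n] step.IH by simp
  qed
  have tail: "N (s i - s j) \<le> 2 * a * (1/2) ^ M" if "M \<le> i" "M \<le> j" for M i j
  proof -
    have *: "N (s j' - s i') \<le> 2 * a * (1/2) ^ M" if "M \<le> i'" "i' \<le> j'" for i' j'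
    proof -
      have "2 * a * (1/2::real) ^ i' \<le> 2 * a * (1/2) ^ M"
        using mult_left_mono[OF power_decreasing[OF that(1)], of "1/2" "2 * a"] a by simp
      moreover have "0 \<le> 2 * a * (1/2::real) ^ j'" using a by simp
      ultimately show ?thesis using telescope[OF that(2)] by linarith
    qed
    show ?thesis
      using *[of i j] *[of j i] that norm_on_commute[OF N S S] by (cases "i \<le> j") auto
  qed
  obtain M where M: "(1/2::real) ^ M < e / (2 * a + 1)"
    using real_arch_pow_inv[of "e / (2 * a + 1)" "1/2::real"] \<open>0 < e\<close> a by auto
  have "2 * a * (1/2::real) ^ M \<le> (2 * a + 1) * (1/2) ^ M"
    by (simp add: distrib_right)
  also have "\<dots> < e"
    using M a by (simp add: pos_less_divide_eq mult.commute)
  finally show "\<exists>M. \<forall>i\<ge>M. \<forall>j\<ge>M. N (s i - s j) < e"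
    using tail by (meson order.strict_trans1)
qed

lemma half_contraction_fixpoint:
  fixes T :: "'a::real_vector \<Rightarrow> 'a"
  assumes N: "norm_on S N" and complete: "complete_on S N"
    and maps: "\<And>u. u \<in> S \<Longrightarrow> N u < r \<Longrightarrow> T u \<in> S"
    and contracts: "\<And>u u'. u \<in> S \<Longrightarrow> u' \<in> S \<Longrightarrow> N u < r \<Longrightarrow> N u' < r \<Longrightarrow>
                       N (T u - T u') \<le> 1/2 * N (u - u')"
    and "0 < r" and T0: "N (T 0) \<le> r/4"
  shows "\<exists>l\<in>S. N l \<le> r/2 \<and> T l = l \<and> (\<lambda>k. N ((T ^^ k) 0 - l)) \<longlonglongrightarrow> 0 \<and> (\<forall>k. (T ^^ k) 0 \<in> S)"
proof -
  define s where "s k = (T ^^ k) 0" for k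
  have s_Suc: "s (Suc k) = T (s k)" for k by (simp add: s_def)
  have S0: "0 \<in> S" using N norm_on_subspace subspace_0 by blast
  have N0: "N 0 = 0" using N by (rule norm_on_zero)
  have T0S: "T 0 \<in> S" using maps[OF S0] N0 \<open>0 < r\<close> by simp
  \<comment> \<open>The iterates stay in the ball of radius r/2, on which T is a half-contraction.\<close>
  have iterates: "s k \<in> S \<and> N (s k) \<le> r/2 \<and> N (s (Suc k) - s k) \<le> N (T 0) * (1/2) ^ k" for k
  proof (induction k)
    case 0
    then show ?case using S0 N0 \<open>0 < r\<close> by (simp add: s_def)
  next
    case (Suc k)
    then have sk: "s k \<in> S" "N (s k) < r" using \<open>0 < r\<close> by auto
    have "N (s (Suc k)) \<le> N (T (s k) - T 0) + N (T 0 - 0)"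
      using norm_on_triangle_diff[OF N maps[OF sk] T0S S0] by (simp add: s_Suc)
    also have "\<dots> \<le> r/2"
      using contracts[OF sk(1) S0 sk(2)] Suc.IH N0 T0 \<open>0 < r\<close> by simp
    finally have bound: "N (s (Suc k)) \<le> r/2" .
    have "N (s (Suc (Suc k)) - s (Suc k)) \<le> 1/2 * N (s (Suc k) - s k)"
      using contracts[OF maps[OF sk] sk(1) _ sk(2)] bound \<open>0 < r\<close> by (simp add: s_Suc)
    then show ?case using Suc.IH maps[OF sk] bound by (simp add: s_Suc)
  qed
  then obtain l where l: "l \<in> S" and lim: "(\<lambda>k. N (s k - l)) \<longlonglongrightarrow> 0"
    using complete norm_on_geometric_Cauchy[OF N] unfolding complete_on_def by blast
  have Nl: "N l \<le> r/2"
    using norm_on_limit_le[OF N _ l lim] iterates by blast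
  then have Nl_r: "N l < r" using \<open>0 < r\<close> by linarith
  have "N (T l - l) \<le> 0"
  proof (rule LIMSEQ_le_const)
    show "(\<lambda>k. 1/2 * N (s k - l) + N (s (Suc k) - l)) \<longlonglongrightarrow> 0"
      using tendsto_add[OF tendsto_mult_right_zero[OF lim, of "1/2"] LIMSEQ_Suc[OF lim]] by simp
    have "N (T l - l) \<le> 1/2 * N (s k - l) + N (s (Suc k) - l)" for k
    proof -
      have sk: "s k \<in> S" "N (s k) < r" using iterates[of k] \<open>0 < r\<close> by auto
      have "N (T l - l) \<le> N (T l - T (s k)) + N (T (s k) - l)"
        using norm_on_triangle_diff[OF N maps[OF l Nl_r] maps[OF sk] l] .
      also have "N (T l - T (s k)) \<le> 1/2 * N (l - s k)"
        using contracts[OF l sk(1) Nl_r sk(2)] .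
      finally show ?thesis
        using norm_on_commute[OF N l sk(1)] by (simp add: s_Suc)
    qed
    then show "\<exists>M. \<forall>k\<ge>M. N (T l - l) \<le> 1/2 * N (s k - l) + N (s (Suc k) - l)" by blast
  qed
  then have "T l = l"
    using norm_on_nonneg[OF N] norm_on_eq_zero_iff[OF N] maps[OF l Nl_r] l N
    by (metis antisym eq_iff_diff_eq_0 norm_on_subspace subspace_diff)
  then show ?thesis
    using l Nl lim iterates unfolding s_def by blast
qed

lemma sc_banach_norm_on: "sc_banach El nm \<Longrightarrow> norm_on (El m) (nm m)"
  unfolding sc_banach_def norm_on_def by (elim conjE) (intro conjI; rule spec)

lemma sc_banach_complete_on: "sc_banach El nm \<Longrightarrow> complete_on (El m) (nm m)"
  unfolding sc_banach_def complete_on_def by (elim conjE) (rule spec)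

lemma sc_banach_level_0: "sc_banach El nm \<Longrightarrow> El 0 = UNIV \<and> nm 0 = norm"
  unfolding sc_banach_def by (elim conjE) (simp add: fun_eq_iff)

text \<open>Compactness of the inclusion of level m into level 0 makes it bounded: otherwise a sequence
  on the unit sphere of level m with unbounded norms would have a norm-convergent subsequence.\<close>
lemma sc_banach_level_norm_bound:
  assumes sc: "sc_banach El nm"
  shows "\<exists>C. \<forall>x\<in>El m. norm x \<le> C * nm m x"
proof (cases "m = 0")
  case True
  then show ?thesis using sc_banach_level_0[OF sc] by (intro exI[of _ 1]) simp
next
  case False
  have N: "norm_on (El m) (nm m)" using sc by (rule sc_banach_norm_on)
  have compact: "\<forall>m n (s :: nat \<Rightarrow> _). m < n \<and> (\<forall>k. s k \<in> El n) \<and> (\<exists>M. \<forall>k. nm n (s k) \<le> M)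
      \<longrightarrow> (\<exists>(q :: nat \<Rightarrow> nat) l. strict_mono q \<and> l \<in> El m \<and> (\<lambda>k. nm m (s (q k) - l)) \<longlonglongrightarrow> 0)"
    using sc unfolding sc_banach_def by (elim conjE) assumption
  show ?thesis
  proof (rule ccontr)
    assume "\<not> ?thesis"
    then have "\<forall>k::nat. \<exists>x. x \<in> El m \<and> norm x > real k * nm m x" by (meson not_le)
    then obtain x where x: "\<And>k. x k \<in> El m" and big: "\<And>k. norm (x k) > real k * nm m (x k)"
      by (auto dest!: choice)
    have pos: "nm m (x k) > 0" for k
    proof -
      have "x k \<noteq> 0" using big[of k] norm_on_zero[OF N] by auto
      then show ?thesis using norm_on_nonneg[OF N x, of k] norm_on_eq_zero_iff[OF N x, of k] by linarith
    qed
    define y where "y k = (1 / nm m (x k)) *\<^sub>R x k" for k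
    have y: "y k \<in> El m" for k
      unfolding y_def using N x norm_on_subspace subspace_scale by blast
    have y_big: "norm (y k) > real k" for k
      using big[of k] pos[of k] by (simp add: y_def pos_less_divide_eq)
    have "nm m (y k) = 1" for k
      using N x[of k] pos[of k] unfolding y_def norm_on_def by auto
    then have "\<exists>M. \<forall>k. nm m (y k) \<le> M" by auto
    then obtain q l where q: "strict_mono q" and "(\<lambda>k. nm 0 (y (q k) - l)) \<longlonglongrightarrow> 0"
      using compact y False by blast
    then have "(\<lambda>k. norm (y (q k) - l)) \<longlonglongrightarrow> 0"
      using sc_banach_level_0[OF sc] by simp
    then have "(\<lambda>k. y (q k)) \<longlonglongrightarrow> l"
      by (simp add: LIM_zero_iff tendsto_norm_zero_iff)
    then have "Bseq (\<lambda>k. y (q k))"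
      by (rule convergent_imp_Bseq[OF convergentI])
    then obtain K where K: "\<And>k. norm (y (q k)) \<le> K"
      unfolding Bseq_def by blast
    obtain k :: nat where "K < real k" using reals_Archimedean2 by blast
    then show False
      using y_big[of "q k"] K[of k] seq_suble[OF q, of k] by linarith
  qed
qed

lemma sc_banach_level_tendsto:
  assumes sc: "sc_banach El nm" and "\<And>k. s k \<in> El m" "l \<in> El m"
    and lim: "(\<lambda>k. nm m (s k - l)) \<longlonglongrightarrow> 0"
  shows "s \<longlonglongrightarrow> l"
proof -
  obtain C where C: "\<forall>x\<in>El m. norm x \<le> C * nm m x"
    using sc_banach_level_norm_bound[OF sc] by blast
  have "(\<lambda>k. s k - l) \<longlonglongrightarrow> 0"
  proof (rule Lim_null_comparison)
    have "s k - l \<in> El m" for k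
      using assms(2,3) sc_banach_norm_on[OF sc] norm_on_subspace subspace_diff by blast
    then show "\<forall>\<^sub>F k in sequentially. norm (s k - l) \<le> C * nm m (s k - l)"
      using C by (simp add: always_eventually)
    show "(\<lambda>k. C * nm m (s k - l)) \<longlonglongrightarrow> 0"
      using tendsto_mult_right_zero[OF lim] .
  qed
  then show ?thesis by (simp add: LIM_zero_iff)
qed

lemma partial_quadrant_zero: "partial_quadrant V \<Longrightarrow> 0 \<in> V"
  unfolding partial_quadrant_def by (auto intro!: image_eqI[of 0 _ 0] dest: linear_0)

lemma rel_open_nbhd0_norm_ball:
  fixes V :: "'v::real_normed_vector set"
  assumes "0 \<in> V" "0 < t"
  shows "rel_open_nbhd0 V norm {v\<in>V. norm v < t}"
  unfolding rel_open_nbhd0_def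
proof (intro conjI ballI)
  fix x assume "x \<in> {v\<in>V. norm v < t}"
  then show "\<exists>e>0. \<forall>y\<in>V. norm (y - x) < e \<longrightarrow> y \<in> {v\<in>V. norm v < t}"
  proof (intro exI[of _ "t - norm x"] conjI ballI impI)
    fix y assume "norm (y - x) < t - norm x" "y \<in> V"
    then show "y \<in> {v\<in>V. norm v < t}"
      using norm_triangle_sub[of y x] by simp
  qed simp
qed (use assms in auto)

lemma rel_open_nbhd0_contains_ball:
  assumes "rel_open_nbhd0 V norm W"
  obtains e where "0 < e" "\<And>v. v \<in> V \<Longrightarrow> norm v < e \<Longrightarrow> v \<in> W"
  using assms unfolding rel_open_nbhd0_def by (metis diff_zero)

locale sc0_contraction =
  fixes El :: "nat \<Rightarrow> 'e::banach set" and nm :: "nat \<Rightarrow> 'e \<Rightarrow> real"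
    and V :: "'v::euclidean_space set" and Uf :: "nat \<Rightarrow> ('v \<times> 'e) set" and f :: "'v \<times> 'e \<Rightarrow> 'e"
  assumes sc: "sc_banach El nm" and zero_in_V: "0 \<in> V"
    and contraction_germ: "sc0_contraction_germ V El nm Uf f"
begin

lemma level_norm_on: "norm_on (El m) (nm m)"
  using sc by (rule sc_banach_norm_on)

lemma level_zero: "0 \<in> El m"
  using level_norm_on norm_on_subspace subspace_0 by blast

lemma level_diff: "x \<in> El m \<Longrightarrow> y \<in> El m \<Longrightarrow> x - y \<in> El m"
  using level_norm_on norm_on_subspace subspace_diff by blast

lemma f_germ: "sc0_germ (sum_levels V El) (sum_norms nm) El nm Uf f"
  using contraction_germ unfolding sc0_contraction_germ_def by (elim conjE)

lemma f_maps: "p \<in> Uf m \<Longrightarrow> f p \<in> El m"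
  using f_germ unfolding sc0_germ_def by (elim conjE) blast

lemma f_zero: "f (0, 0) = 0"
  using f_germ unfolding sc0_germ_def by (elim conjE) (simp add: zero_prod_def)

lemma f_cont_lev: "cont_lev (Uf m) (sum_norms nm m) (nm m) f"
  using f_germ unfolding sc0_germ_def by (elim conjE) (rule spec)

definition half_contracting :: "nat \<Rightarrow> real \<Rightarrow> bool" where
  "half_contracting m r \<longleftrightarrow> 0 < r \<and> (\<forall>v\<in>V. \<forall>u\<in>El m. \<forall>u'\<in>El m. norm v < r \<and> nm m u < r \<and> nm m u' < r
     \<longrightarrow> (v, u) \<in> Uf m \<and> nm m ((u - f (v, u)) - (u' - f (v, u'))) \<le> 1/2 * nm m (u - u'))"

lemma ex_half_contracting: "\<exists>r. half_contracting m r"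
proof -
  have "\<forall>m. \<forall>\<epsilon>::real. 0 < \<epsilon> \<and> \<epsilon> < 1 \<longrightarrow> (\<exists>r>0. \<forall>v\<in>V. \<forall>u\<in>El m. \<forall>u'\<in>El m.
      norm v < r \<and> nm m u < r \<and> nm m u' < r \<longrightarrow> (v, u) \<in> Uf m \<and> (v, u') \<in> Uf m \<and>
      nm m ((u - f (v, u)) - (u' - f (v, u'))) \<le> \<epsilon> * nm m (u - u'))"
    using contraction_germ unfolding sc0_contraction_germ_def by (elim conjE) assumption
  from spec[OF spec[OF this, of m], of "1/2"] have "\<exists>r>0. \<forall>v\<in>V. \<forall>u\<in>El m. \<forall>u'\<in>El m.
      norm v < r \<and> nm m u < r \<and> nm m u' < r \<longrightarrow> (v, u) \<in> Uf m \<and> (v, u') \<in> Uf m \<and>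
      nm m ((u - f (v, u)) - (u' - f (v, u'))) \<le> 1/2 * nm m (u - u')"
    by (rule mp) simp
  then show ?thesis unfolding half_contracting_def by blast
qed

lemma half_contracting_domain:
  "half_contracting m r \<Longrightarrow> v \<in> V \<Longrightarrow> u \<in> El m \<Longrightarrow> norm v < r \<Longrightarrow> nm m u < r \<Longrightarrow> (v, u) \<in> Uf m"
  unfolding half_contracting_def by blast

lemma half_contracting_estimate:
  "half_contracting m r \<Longrightarrow> v \<in> V \<Longrightarrow> u \<in> El m \<Longrightarrow> u' \<in> El m \<Longrightarrow> norm v < r \<Longrightarrow> nm m u < r \<Longrightarrow>
    nm m u' < r \<Longrightarrow> nm m ((u - f (v, u)) - (u' - f (v, u'))) \<le> 1/2 * nm m (u - u')"
  unfolding half_contracting_def by blast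

text \<open>u - u' = A - f (v, u') with A = (u - f (v, u)) - (u' - f (v, u')), and nm A \<le> nm (u - u') / 2.\<close>
lemma half_contracting_zero_close:
  assumes hc: "half_contracting m r" and v: "v \<in> V" "norm v < r"
    and u: "u \<in> El m" "nm m u < r" and u': "u' \<in> El m" "nm m u' < r" and zero: "f (v, u) = 0"
  shows "nm m (u - u') \<le> 2 * nm m (f (v, u'))"
proof -
  have fu': "f (v, u') \<in> El m" using f_maps half_contracting_domain[OF hc v(1) u'(1) v(2) u'(2)] .
  define A where "A = (u - f (v, u)) - (u' - f (v, u'))"
  have "nm m A \<le> 1/2 * nm m (u - u')"
    unfolding A_def using half_contracting_estimate[OF hc v(1) u(1) u'(1) v(2) u(2) u'(2)] .
  moreover have "nm m (u - u') \<le> nm m A + nm m (f (v, u'))"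
  proof -
    have "A \<in> El m" unfolding A_def using u(1) u'(1) fu' zero level_diff by simp
    then have "nm m (A - f (v, u')) \<le> nm m (A - 0) + nm m (0 - f (v, u'))"
      using norm_on_triangle_diff[OF level_norm_on _ level_zero fu'] by blast
    moreover have "u - u' = A - f (v, u')" unfolding A_def using zero by simp
    ultimately show ?thesis using norm_on_minus[OF level_norm_on fu'] by simp
  qed
  ultimately show ?thesis by linarith
qed

definition picard :: "'v \<Rightarrow> nat \<Rightarrow> 'e" where
  "picard v k = ((\<lambda>u. u - f (v, u)) ^^ k) 0"

definition picard_solves :: "nat \<Rightarrow> real \<Rightarrow> real \<Rightarrow> bool" where
  "picard_solves m r \<rho> \<longleftrightarrow> (\<forall>v\<in>V. norm v < \<rho> \<longrightarrow> (\<exists>l\<in>El m. f (v, l) = 0 \<and> nm m l < r \<and>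
     (\<lambda>k. nm m (picard v k - l)) \<longlonglongrightarrow> 0 \<and> (\<forall>k. picard v k \<in> El m)))"

lemma picard_zero: "picard 0 k = 0"
  by (induction k) (simp_all add: picard_def f_zero)

lemma ex_picard_solves:
  assumes hc: "half_contracting m r"
  shows "\<exists>\<rho>>0. \<rho> \<le> r \<and> picard_solves m r \<rho>"
proof -
  have "0 < r" using hc unfolding half_contracting_def by blast
  have "(0, 0) \<in> Uf m"
    using half_contracting_domain[OF hc zero_in_V level_zero] norm_on_zero[OF level_norm_on] \<open>0 < r\<close>
    by simp
  moreover have "0 < r/4" using \<open>0 < r\<close> by simp
  ultimately obtain \<delta> where "0 < \<delta>"
    and \<delta>: "\<And>p. p \<in> Uf m \<Longrightarrow> sum_norms nm m (p - (0, 0)) < \<delta> \<Longrightarrow> nm m (f p - f (0, 0)) < r/4"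
    using f_cont_lev[of m] unfolding cont_lev_def by blast
  have "picard_solves m r (min r \<delta>)"
    unfolding picard_solves_def
  proof (intro ballI impI)
    fix v assume v: "v \<in> V" "norm v < min r \<delta>"
    have El0: "0 \<in> El m" "nm m 0 = 0"
      using level_zero norm_on_zero[OF level_norm_on] by blast+
    have dom: "(v, u) \<in> Uf m" if "u \<in> El m" "nm m u < r" for u
      using half_contracting_domain[OF hc v(1) that(1)] v that by simp
    have "nm m (f (v, 0)) < r/4"
      using \<delta>[OF dom[OF El0(1)]] El0 v \<open>0 < r\<close> f_zero by (simp add: sum_norms_def)
    then have T0: "nm m (0 - f (v, 0)) \<le> r/4"
      using norm_on_minus[OF level_norm_on f_maps[OF dom[OF El0(1)]]] El0 \<open>0 < r\<close> by simp
    have maps: "u - f (v, u) \<in> El m" if "u \<in> El m" "nm m u < r" for u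
      using level_diff f_maps dom that by blast
    have contracts: "nm m ((u - f (v, u)) - (u' - f (v, u'))) \<le> 1/2 * nm m (u - u')"
      if "u \<in> El m" "u' \<in> El m" "nm m u < r" "nm m u' < r" for u u'
      using half_contracting_estimate[OF hc v(1) that(1,2)] v that by simp
    obtain l where l: "l \<in> El m" "nm m l \<le> r/2" "l - f (v, l) = l"
        "(\<lambda>k. nm m (picard v k - l)) \<longlonglongrightarrow> 0" "\<forall>k. picard v k \<in> El m"
      using half_contraction_fixpoint[OF level_norm_on sc_banach_complete_on[OF sc],
          where T = "\<lambda>u. u - f (v, u)", OF maps contracts \<open>0 < r\<close> T0]
      unfolding picard_def by blast
    then show "\<exists>l\<in>El m. f (v, l) = 0 \<and> nm m l < r \<and>
        (\<lambda>k. nm m (picard v k - l)) \<longlonglongrightarrow> 0 \<and> (\<forall>k. picard v k \<in> El m)"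
      using l \<open>0 < r\<close> by (intro bexI[of _ l]) auto
  qed
  then show ?thesis using \<open>0 < r\<close> \<open>0 < \<delta>\<close> by (intro exI[of _ "min r \<delta>"]) simp
qed

end

locale sc0_contraction_radii = sc0_contraction El nm V Uf f
  for El :: "nat \<Rightarrow> 'e::banach set" and nm and V :: "'v::euclidean_space set" and Uf f +
  fixes r \<rho> :: "nat \<Rightarrow> real"
  assumes half_contracting_r: "half_contracting m (r m)"
    and \<rho>_pos: "0 < \<rho> m" and \<rho>_le_r: "\<rho> m \<le> r m" and picard_solves_\<rho>: "picard_solves m (r m) (\<rho> m)"
begin

definition solution :: "'v \<Rightarrow> 'e" where
  "solution v = lim (picard v)"

definition radius :: "nat \<Rightarrow> real" where
  "radius m = Min (\<rho> ` {..m})"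

definition domain :: "nat \<Rightarrow> 'v set" where
  "domain m = {v\<in>V. norm v < radius m}"

lemma radius_pos: "0 < radius m"
  unfolding radius_def using \<rho>_pos by simp

lemma radius_le_\<rho>: "radius m \<le> \<rho> m"
  unfolding radius_def by simp

lemma radius_Suc_le: "radius (Suc m) \<le> radius m"
  unfolding radius_def by (rule Min_antimono) auto

lemma domain_Suc_subset: "domain (Suc m) \<subseteq> domain m"
  unfolding domain_def using radius_Suc_le[of m] by auto

lemma domain_nbhd: "rel_open_nbhd0 V norm (domain m)"
  unfolding domain_def using rel_open_nbhd0_norm_ball[OF zero_in_V radius_pos] .

text \<open>Convergence of the Picard iterates in level m implies convergence in E, so the
  level-m fixed point is the one limit defining the solution, whatever the level.\<close>
lemma solution_in_domain:
  assumes "v \<in> domain m"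
  shows "v \<in> V" "norm v < r m" "solution v \<in> El m" "nm m (solution v) < r m" "f (v, solution v) = 0"
proof -
  show v: "v \<in> V" "norm v < r m"
    using assms radius_le_\<rho>[of m] \<rho>_le_r[of m] unfolding domain_def by auto
  have "norm v < \<rho> m" using assms radius_le_\<rho>[of m] unfolding domain_def by auto
  then obtain l where l: "l \<in> El m" "f (v, l) = 0" "nm m l < r m"
      "(\<lambda>k. nm m (picard v k - l)) \<longlonglongrightarrow> 0" "\<forall>k. picard v k \<in> El m"
    using picard_solves_\<rho>[of m] v(1) unfolding picard_solves_def by blast
  then have "solution v = l"
    unfolding solution_def by (intro limI sc_banach_level_tendsto[OF sc]) auto
  then show "solution v \<in> El m" "nm m (solution v) < r m" "f (v, solution v) = 0"
    using l by auto
qed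

lemma solution_zero: "solution 0 = 0"
  unfolding solution_def picard_zero by (simp add: limI)

lemma solution_cont_lev: "cont_lev (domain m) norm (nm m) solution"
  unfolding cont_lev_def
proof (intro ballI allI impI)
  fix x and e :: real assume x: "x \<in> domain m" and "0 < e"
  note X = solution_in_domain[OF x]
  have "(x, solution x) \<in> Uf m"
    using half_contracting_domain[OF half_contracting_r X(1,3,2,4)] .
  moreover have "0 < e/2" using \<open>0 < e\<close> by simp
  ultimately obtain \<delta> where "0 < \<delta>" and \<delta>: "\<And>p. p \<in> Uf m \<Longrightarrow> sum_norms nm m (p - (x, solution x)) < \<delta>
      \<Longrightarrow> nm m (f p - f (x, solution x)) < e/2"
    using f_cont_lev[of m] unfolding cont_lev_def by blast
  show "\<exists>\<delta>>0. \<forall>y\<in>domain m. norm (y - x) < \<delta> \<longrightarrow> nm m (solution y - solution x) < e"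
  proof (intro exI[of _ \<delta>] conjI ballI impI)
    fix y assume y: "y \<in> domain m" and "norm (y - x) < \<delta>"
    note Y = solution_in_domain[OF y]
    have "(y, solution x) \<in> Uf m"
      using half_contracting_domain[OF half_contracting_r Y(1) X(3) Y(2) X(4)] .
    moreover have "sum_norms nm m ((y, solution x) - (x, solution x)) < \<delta>"
      using \<open>norm (y - x) < \<delta>\<close> norm_on_zero[OF level_norm_on] by (simp add: sum_norms_def)
    ultimately have "nm m (f (y, solution x)) < e/2"
      using \<delta> X(5) by fastforce
    then show "nm m (solution y - solution x) < e"
      using half_contracting_zero_close[OF half_contracting_r Y(1,2,3,4) X(3,4) Y(5)] by linarith
  qed (rule \<open>0 < \<delta>\<close>)
qed

lemma solution_sc0_germ: "sc0_germ (\<lambda>_. V) (\<lambda>_. norm) El nm domain solution"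
  unfolding sc0_germ_def
  using domain_nbhd domain_Suc_subset solution_zero solution_in_domain(3) solution_cont_lev
  by blast

lemma solution_solves: "solves_germ V Uf f domain solution"
  unfolding solves_germ_def
  using domain_nbhd solution_in_domain[of _ 0] half_contracting_domain[OF half_contracting_r]
  by blast

lemma solution_unique:
  assumes germ: "sc0_germ (\<lambda>_. V) (\<lambda>_. norm) El nm Ud d"
    and solves: "solves_germ V Uf f Ud d"
  shows "germ_eq V domain solution Ud d"
proof -
  have nm0: "nm 0 = norm" using sc_banach_level_0[OF sc] by blast
  have Ud: "rel_open_nbhd0 V norm (Ud 0)" and "d 0 = 0"
    and cont: "cont_lev (Ud 0) norm (nm 0) d"
    using germ unfolding sc0_germ_def by auto
  obtain W where W: "rel_open_nbhd0 V norm W" "\<And>v. v \<in> W \<Longrightarrow> f (v, d v) = 0"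
    using solves unfolding solves_germ_def by blast
  have "0 \<in> Ud 0" "0 < r 0"
    using Ud \<rho>_pos[of 0] \<rho>_le_r[of 0] unfolding rel_open_nbhd0_def by auto
  then obtain \<delta> where "0 < \<delta>" and \<delta>: "\<And>v. v \<in> Ud 0 \<Longrightarrow> norm v < \<delta> \<Longrightarrow> norm (d v) < r 0"
    using cont \<open>d 0 = 0\<close> nm0 unfolding cont_lev_def by fastforce
  obtain e1 where "0 < e1" and e1: "\<And>v. v \<in> V \<Longrightarrow> norm v < e1 \<Longrightarrow> v \<in> Ud 0"
    using rel_open_nbhd0_contains_ball[OF Ud] by blast
  obtain e2 where "0 < e2" and e2: "\<And>v. v \<in> V \<Longrightarrow> norm v < e2 \<Longrightarrow> v \<in> W"
    using rel_open_nbhd0_contains_ball[OF W(1)] by blast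
  define t where "t = min (min (radius 0) \<delta>) (min e1 e2)"
  have "0 < t" unfolding t_def using radius_pos \<open>0 < \<delta>\<close> \<open>0 < e1\<close> \<open>0 < e2\<close> by simp
  have "solution v = d v" if v: "v \<in> V" "norm v < t" for v
  proof -
    have dom: "v \<in> domain 0" using v unfolding domain_def t_def by simp
    note S = solution_in_domain[OF dom]
    have "d v \<in> El 0" "nm 0 (d v) < r 0"
      using \<delta> e1 v sc_banach_level_0[OF sc] unfolding t_def by auto
    then have "nm 0 (solution v - d v) \<le> 2 * nm 0 (f (v, d v))"
      using half_contracting_zero_close[OF half_contracting_r S(1-4) _ _ S(5)] by blast
    then show ?thesis using W(2) e2 v nm0 unfolding t_def by simp
  qed
  moreover have "{v\<in>V. norm v < t} \<subseteq> domain 0" "{v\<in>V. norm v < t} \<subseteq> Ud 0"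
    using e1 unfolding domain_def t_def by auto
  ultimately show ?thesis
    unfolding germ_eq_def using rel_open_nbhd0_norm_ball[OF zero_in_V \<open>0 < t\<close>] by blast
qed

end


theorem theorem2p2:
  fixes El :: "nat \<Rightarrow> 'e::banach set" and nm :: "nat \<Rightarrow> 'e \<Rightarrow> real"
    and V :: "'v::euclidean_space set"
    and Uf :: "nat \<Rightarrow> ('v \<times> 'e) set" and f :: "'v \<times> 'e \<Rightarrow> 'e"
  assumes "sc_banach El nm"
    and "partial_quadrant V"
    and "sc0_contraction_germ V El nm Uf f"
  shows "\<exists>Ud d. sc0_germ (\<lambda>_. V) (\<lambda>_. norm) El nm Ud d \<and> solves_germ V Uf f Ud d \<and>
           (\<forall>Ud' d'. sc0_germ (\<lambda>_. V) (\<lambda>_. norm) El nm Ud' d' \<and> solves_germ V Uf f Ud' d'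
                \<longrightarrow> germ_eq V Ud d Ud' d')"
proof -
  interpret sc0_contraction El nm V Uf f
    using assms partial_quadrant_zero by unfold_locales
  have "\<forall>m. \<exists>r \<rho>. half_contracting m r \<and> 0 < \<rho> \<and> \<rho> \<le> r \<and> picard_solves m r \<rho>"
    using ex_half_contracting ex_picard_solves by blast
  then obtain r \<rho> where "\<And>m. half_contracting m (r m) \<and> 0 < \<rho> m \<and> \<rho> m \<le> r m \<and> picard_solves m (r m) (\<rho> m)"
    by metis
  then interpret sc0_contraction_radii El nm V Uf f r \<rho>
    by unfold_locales auto
  show ?thesis
    using solution_sc0_germ solution_solves solution_unique by blast
qed

end
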